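(* Let $G$ be a finite group and $H$ a finite abelian group. Then $A_{G\times H}(t)=A_G(|H|t)$ and $B_{G\times H}(t)=B_G(|H|t)$.
   Context: For a finite group $G$ and $n\ge 0$, $G$ acts on $G^n$ by simultaneous conjugation. Let $G^{(n)}\subseteq G^n$ be the set of $n$-tuples of pairwise commuting elements. Let $\alpha_{G,n}$ (resp. $\beta_{G,n}$) be the number of $G$-orbits on $G^n$ (resp. on $G^{(n)}$), and set $A_G(t)=\sum_{n\ge0}\alpha_{G,n}t^n$, $B_G(t)=\sum_{n\ge0}\beta_{G,n}t^n$. *)

theory Defs
  imports "HOL-Algebra.Group" "HOL-Computational_Algebra.Formal_Power_Series"
begin

definition tuples :: "('a, 'b) monoid_scheme \<Rightarrow> nat \<Rightarrow> (nat \<Rightarrow> 'a) set" where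
  "tuples G n = {0..<n} \<rightarrow>\<^sub>E carrier G"

definition commuting_tuples :: "('a, 'b) monoid_scheme \<Rightarrow> nat \<Rightarrow> (nat \<Rightarrow> 'a) set" where
  "commuting_tuples G n = {x \<in> tuples G n. \<forall>i<n. \<forall>j<n. x i \<otimes>\<^bsub>G\<^esub> x j = x j \<otimes>\<^bsub>G\<^esub> x i}"

definition conj_orbit :: "('a, 'b) monoid_scheme \<Rightarrow> nat \<Rightarrow> (nat \<Rightarrow> 'a) \<Rightarrow> (nat \<Rightarrow> 'a) set" where
  "conj_orbit G n x = {y \<in> tuples G n. \<exists>g\<in>carrier G. \<forall>i<n. y i = g \<otimes>\<^bsub>G\<^esub> x i \<otimes>\<^bsub>G\<^esub> inv\<^bsub>G\<^esub> g}"

definition alpha :: "('a, 'b) monoid_scheme \<Rightarrow> nat \<Rightarrow> nat" where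
  "alpha G n = card (conj_orbit G n ` tuples G n)"

definition beta :: "('a, 'b) monoid_scheme \<Rightarrow> nat \<Rightarrow> nat" where
  "beta G n = card (conj_orbit G n ` commuting_tuples G n)"

definition A_series :: "('a, 'b) monoid_scheme \<Rightarrow> nat fps" where
  "A_series G = Abs_fps (alpha G)"

definition B_series :: "('a, 'b) monoid_scheme \<Rightarrow> nat fps" where
  "B_series G = Abs_fps (beta G)"

end

theory Submission
  imports Defs
begin

text \<open>
  A tuple over \<open>G \<times> H\<close> is a pair of a tuple \<open>x\<close> over \<open>G\<close> and a tuple \<open>h\<close> over \<open>H\<close>.
  Conjugation by \<open>(g, k)\<close> conjugates \<open>x\<close> by \<open>g\<close> and, \<open>H\<close> being abelian, fixes \<open>h\<close>;
  so the orbit of \<open>(x, h)\<close> is the orbit of \<open>x\<close> with \<open>h\<close> attached, and the orbits over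
  \<open>G \<times> H\<close> correspond bijectively to pairs of an orbit over \<open>G\<close> and an \<open>n\<close>-tuple over \<open>H\<close>.
  A tuple over \<open>G \<times> H\<close> commutes iff both components do, which is automatic in \<open>H\<close>.
  Hence \<open>\<alpha>\<^sub>n\<close> and \<open>\<beta>\<^sub>n\<close> are multiplied by \<open>|H|\<^sup>n\<close>, i.e. \<open>t\<close> becomes \<open>|H| t\<close>.
\<close>

unbundle fps_syntax

definition pair_tuple :: "nat \<Rightarrow> (nat \<Rightarrow> 'a) \<Rightarrow> (nat \<Rightarrow> 'c) \<Rightarrow> nat \<Rightarrow> 'a \<times> 'c" where
  "pair_tuple n x h = (\<lambda>i\<in>{0..<n}. (x i, h i))"

definition conj_tuple :: "('a, 'b) monoid_scheme \<Rightarrow> nat \<Rightarrow> 'a \<Rightarrow> (nat \<Rightarrow> 'a) \<Rightarrow> nat \<Rightarrow> 'a" where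
  "conj_tuple G n g x = (\<lambda>i\<in>{0..<n}. g \<otimes>\<^bsub>G\<^esub> x i \<otimes>\<^bsub>G\<^esub> inv\<^bsub>G\<^esub> g)"

lemma pair_tuple_eq_iff:
  assumes "x \<in> tuples G n" "x' \<in> tuples G n" "h \<in> tuples H n" "h' \<in> tuples H n"
  shows "pair_tuple n x h = pair_tuple n x' h' \<longleftrightarrow> x = x' \<and> h = h'"
proof
  assume eq: "pair_tuple n x h = pair_tuple n x' h'"
  have "x i = x' i \<and> h i = h' i" if "i < n" for i
    using fun_cong[OF eq, of i] that by (simp add: pair_tuple_def)
  with assms show "x = x' \<and> h = h'"
    unfolding tuples_def by (metis PiE_ext atLeastLessThan_iff)
qed simp

lemma tuples_DirProd:
  "tuples (G \<times>\<times> H) n = (\<lambda>(x, h). pair_tuple n x h) ` (tuples G n \<times> tuples H n)"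
proof (intro equalityI subsetI)
  fix p assume p: "p \<in> tuples (G \<times>\<times> H) n"
  define x where "x = (\<lambda>i\<in>{0..<n}. fst (p i))"
  define h where "h = (\<lambda>i\<in>{0..<n}. snd (p i))"
  have "p = pair_tuple n x h"
    using p by (auto simp: x_def h_def tuples_def pair_tuple_def PiE_def extensional_def)
  moreover have "x \<in> tuples G n" "h \<in> tuples H n"
    using p by (auto simp: x_def h_def tuples_def PiE_iff mem_Times_iff)
  ultimately show "p \<in> (\<lambda>(x, h). pair_tuple n x h) ` (tuples G n \<times> tuples H n)"
    by blast
next
  fix p assume "p \<in> (\<lambda>(x, h). pair_tuple n x h) ` (tuples G n \<times> tuples H n)"
  then obtain x h where "x \<in> tuples G n" "h \<in> tuples H n" "p = pair_tuple n x h"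
    by fastforce
  then show "p \<in> tuples (G \<times>\<times> H) n"
    by (auto simp: tuples_def pair_tuple_def)
qed

lemma commuting_tuples_subset: "commuting_tuples G n \<subseteq> tuples G n"
  by (simp add: commuting_tuples_def)

lemma commuting_tuples_DirProd:
  "commuting_tuples (G \<times>\<times> H) n
     = (\<lambda>(x, h). pair_tuple n x h) ` (commuting_tuples G n \<times> commuting_tuples H n)"
proof -
  have pair_commuting_iff: "pair_tuple n x h \<in> commuting_tuples (G \<times>\<times> H) n
      \<longleftrightarrow> x \<in> commuting_tuples G n \<and> h \<in> commuting_tuples H n"
    if "x \<in> tuples G n" "h \<in> tuples H n" for x h
    using that tuples_DirProd[of G H n] by (auto simp: commuting_tuples_def pair_tuple_def)
  show ?thesis
  proof (intro equalityI subsetI)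
    fix p assume p: "p \<in> commuting_tuples (G \<times>\<times> H) n"
    then have "p \<in> tuples (G \<times>\<times> H) n"
      using commuting_tuples_subset by blast
    then obtain x h where xh: "x \<in> tuples G n" "h \<in> tuples H n" and p_eq: "p = pair_tuple n x h"
      unfolding tuples_DirProd by fastforce
    then have "(x, h) \<in> commuting_tuples G n \<times> commuting_tuples H n"
      using p pair_commuting_iff[OF xh] by simp
    with p_eq show "p \<in> (\<lambda>(x, h). pair_tuple n x h) ` (commuting_tuples G n \<times> commuting_tuples H n)"
      by (intro rev_image_eqI[of "(x, h)"]) simp_all
  next
    fix p assume "p \<in> (\<lambda>(x, h). pair_tuple n x h) ` (commuting_tuples G n \<times> commuting_tuples H n)"
    then obtain x h where xh: "x \<in> commuting_tuples G n" "h \<in> commuting_tuples H n"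
      and p_eq: "p = pair_tuple n x h"
      by fastforce
    moreover have "x \<in> tuples G n" "h \<in> tuples H n"
      using xh commuting_tuples_subset by blast+
    ultimately show "p \<in> commuting_tuples (G \<times>\<times> H) n"
      using pair_commuting_iff by simp
  qed
qed

lemma commuting_tuples_comm_monoid:
  assumes "comm_monoid H"
  shows "commuting_tuples H n = tuples H n"
  using comm_monoid.m_comm[OF assms] unfolding commuting_tuples_def tuples_def by fastforce

lemma conj_tuple_in_tuples:
  assumes "group G" "g \<in> carrier G" "x \<in> tuples G n"
  shows "conj_tuple G n g x \<in> tuples G n"
  using assms
  by (auto simp: conj_tuple_def tuples_def PiE_iff
      intro!: group.inv_closed monoid.m_closed group.is_monoid)

lemma conj_orbit_subset: "conj_orbit G n x \<subseteq> tuples G n"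
  by (auto simp: conj_orbit_def)

lemma conj_orbit_eq_image:
  assumes "group G" "x \<in> tuples G n"
  shows "conj_orbit G n x = (\<lambda>g. conj_tuple G n g x) ` carrier G"
proof (intro equalityI subsetI)
  fix y assume "y \<in> conj_orbit G n x"
  then obtain g where y: "y \<in> tuples G n" and g: "g \<in> carrier G"
    and conj: "\<forall>i<n. y i = g \<otimes>\<^bsub>G\<^esub> x i \<otimes>\<^bsub>G\<^esub> inv\<^bsub>G\<^esub> g"
    unfolding conj_orbit_def by blast
  have "y = conj_tuple G n g x"
    using y conj_tuple_in_tuples[OF assms(1) g assms(2)] conj
    unfolding tuples_def by (intro PiE_ext) (auto simp: conj_tuple_def)
  with g show "y \<in> (\<lambda>g. conj_tuple G n g x) ` carrier G" by blast
next
  fix y assume "y \<in> (\<lambda>g. conj_tuple G n g x) ` carrier G"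
  then obtain g where g: "g \<in> carrier G" and y: "y = conj_tuple G n g x" by blast
  have "y \<in> tuples G n"
    using conj_tuple_in_tuples[OF assms(1) g assms(2)] y by simp
  with g y show "y \<in> conj_orbit G n x"
    unfolding conj_orbit_def by (auto simp: conj_tuple_def)
qed

lemma conj_orbit_self:
  assumes "group G" "x \<in> tuples G n"
  shows "x \<in> conj_orbit G n x"
proof -
  interpret G: group G by fact
  have "conj_tuple G n \<one>\<^bsub>G\<^esub> x = x"
    using assms(2) by (auto simp: conj_tuple_def tuples_def PiE_iff extensional_def)
  with assms show ?thesis
    by (metis conj_orbit_eq_image image_eqI G.one_closed)
qed

lemma conj_tuple_DirProd_comm_group:
  assumes "group G" "comm_group H"
    and "g \<in> carrier G" "k \<in> carrier H" "h \<in> tuples H n"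
  shows "conj_tuple (G \<times>\<times> H) n (g, k) (pair_tuple n x h) = pair_tuple n (conj_tuple G n g x) h"
proof -
  interpret H: comm_group H by fact
  have "k \<otimes>\<^bsub>H\<^esub> h i \<otimes>\<^bsub>H\<^esub> inv\<^bsub>H\<^esub> k = h i" if "i < n" for i
  proof -
    have "h i \<in> carrier H"
      using \<open>h \<in> tuples H n\<close> that by (auto simp: tuples_def)
    with \<open>k \<in> carrier H\<close> show ?thesis
      by (simp add: H.m_comm[of k] H.m_assoc)
  qed
  then show ?thesis
    using assms by (auto simp: conj_tuple_def pair_tuple_def comm_group.axioms(2))
qed

lemma conj_orbit_pair_tuple:
  assumes "group G" "comm_group H" "x \<in> tuples G n" "h \<in> tuples H n"
  shows "conj_orbit (G \<times>\<times> H) n (pair_tuple n x h) = (\<lambda>y. pair_tuple n y h) ` conj_orbit G n x"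
proof -
  have "group H"
    using assms(2) by (simp add: comm_group_def)
  then have "carrier H \<noteq> {}"
    using monoid.one_closed[OF group.is_monoid] by blast
  have "pair_tuple n x h \<in> tuples (G \<times>\<times> H) n"
    using assms(3,4) by (auto simp: tuples_DirProd)
  then have "conj_orbit (G \<times>\<times> H) n (pair_tuple n x h)
      = (\<lambda>(g, k). pair_tuple n (conj_tuple G n g x) h) ` (carrier G \<times> carrier H)"
    using assms DirProd_group[OF assms(1) \<open>group H\<close>]
    by (auto simp: conj_orbit_eq_image conj_tuple_DirProd_comm_group image_iff)
  also have "\<dots> = (\<lambda>g. pair_tuple n (conj_tuple G n g x) h) ` fst ` (carrier G \<times> carrier H)"
    by (simp only: image_image case_prod_unfold)
  also have "\<dots> = (\<lambda>g. pair_tuple n (conj_tuple G n g x) h) ` carrier G"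
    using \<open>carrier H \<noteq> {}\<close> by simp
  finally show ?thesis
    using assms by (simp add: conj_orbit_eq_image image_image)
qed

lemma card_conj_orbits_DirProd_comm_group:
  fixes G :: "('a, 'b) monoid_scheme" and H :: "('c, 'd) monoid_scheme"
  assumes "group G" "comm_group H" "S \<subseteq> tuples G n"
  shows "card (conj_orbit (G \<times>\<times> H) n ` (\<lambda>(x, h). pair_tuple n x h) ` (S \<times> tuples H n))
    = card (conj_orbit G n ` S) * card (tuples H n)"
proof -
  define lift :: "(nat \<Rightarrow> 'a) set \<times> (nat \<Rightarrow> 'c) \<Rightarrow> (nat \<Rightarrow> 'a \<times> 'c) set"
    where "lift = (\<lambda>(orb, h). (\<lambda>y. pair_tuple n y h) ` orb)"
  have "conj_orbit (G \<times>\<times> H) n (pair_tuple n x h) = lift (conj_orbit G n x, h)"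
    if "x \<in> S" "h \<in> tuples H n" for x h
    using conj_orbit_pair_tuple[OF assms(1,2) subsetD[OF assms(3) that(1)] that(2)]
    by (simp add: lift_def)
  then have "conj_orbit (G \<times>\<times> H) n ` (\<lambda>(x, h). pair_tuple n x h) ` (S \<times> tuples H n)
      = lift ` map_prod (conj_orbit G n) id ` (S \<times> tuples H n)"
    unfolding image_image by (intro image_cong) auto
  also have "\<dots> = lift ` (conj_orbit G n ` S \<times> tuples H n)"
    by (simp add: map_prod_surj_on)
  finally have orbits: "conj_orbit (G \<times>\<times> H) n ` (\<lambda>(x, h). pair_tuple n x h) ` (S \<times> tuples H n)
      = lift ` (conj_orbit G n ` S \<times> tuples H n)" .
  have "inj_on lift (conj_orbit G n ` S \<times> tuples H n)"
  proof (rule inj_onI, clarify)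
    fix x h x' h'
    assume x: "x \<in> S" and h: "h \<in> tuples H n" and x': "x' \<in> S" and h': "h' \<in> tuples H n"
      and eq: "lift (conj_orbit G n x, h) = lift (conj_orbit G n x', h')"
    have "x \<in> conj_orbit G n x"
      using assms(1,3) x by (auto intro: conj_orbit_self)
    with eq obtain y where "y \<in> conj_orbit G n x'" "pair_tuple n x h = pair_tuple n y h'"
      by (auto simp: lift_def)
    then have "h = h'"
      using pair_tuple_eq_iff subsetD[OF assms(3) x] h h' conj_orbit_subset by blast
    moreover have "inj_on (\<lambda>y. pair_tuple n y h) (tuples G n)"
      using pair_tuple_eq_iff h by (blast intro: inj_onI)
    ultimately show "conj_orbit G n x = conj_orbit G n x' \<and> h = h'"
      using eq conj_orbit_subset[of G n x] conj_orbit_subset[of G n x']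
      by (simp add: lift_def inj_on_image_eq_iff)
  qed
  then show ?thesis
    by (simp add: orbits card_image card_cartesian_product)
qed

lemma card_tuples: "finite (carrier G) \<Longrightarrow> card (tuples G n) = card (carrier G) ^ n"
  by (simp add: tuples_def card_PiE)

lemma alpha_DirProd_comm_group:
  assumes "group G" "comm_group H" "finite (carrier H)"
  shows "alpha (G \<times>\<times> H) n = card (carrier H) ^ n * alpha G n"
  using card_conj_orbits_DirProd_comm_group[OF assms(1,2) order_refl]
  by (simp add: alpha_def tuples_DirProd card_tuples[OF assms(3)])

lemma beta_DirProd_comm_group:
  assumes "group G" "comm_group H" "finite (carrier H)"
  shows "beta (G \<times>\<times> H) n = card (carrier H) ^ n * beta G n"
  using card_conj_orbits_DirProd_comm_group[OF assms(1,2) commuting_tuples_subset]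
  by (simp add: beta_def commuting_tuples_DirProd commuting_tuples_comm_monoid
      comm_group.axioms(1)[OF assms(2)] card_tuples[OF assms(3)])

lemma fps_compose_scaled_X_nth:
  "(a oo (fps_const c * fps_X)) $ n = c ^ n * a $ n"
  for a :: "'a::comm_semiring_1 fps"
proof -
  have "(fps_const c * fps_X) ^ i $ n = (if i = n then c ^ n else 0)" for i
    by (simp add: power_mult_distrib)
  then show ?thesis
    by (simp add: fps_compose_nth mult_delta_right mult.commute)
qed

theorem corollary4p6:
  fixes G :: "('a, 'b) monoid_scheme" and H :: "('c, 'd) monoid_scheme"
  assumes "group G" and "finite (carrier G)"
    and "comm_group H" and "finite (carrier H)"
  shows "A_series (G \<times>\<times> H) = A_series G oo (of_nat (card (carrier H)) * fps_X)
    \<and> B_series (G \<times>\<times> H) = B_series G oo (of_nat (card (carrier H)) * fps_X)"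
  using alpha_DirProd_comm_group[OF assms(1,3,4)] beta_DirProd_comm_group[OF assms(1,3,4)]
  by (simp add: A_series_def B_series_def fps_eq_iff fps_of_nat[symmetric] fps_compose_scaled_X_nth)

end
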